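(* For every $p\in[0,1/2)$, the noisy sorting capacity satisfies $C(p)\le 1-H(p)$.
   Context: Noisy sorting problem. Fix $p\in[0,1/2)$. Let $\theta_1,\ldots,\theta_n$ be distinct real numbers; their ordering is the permutation $\pi$ of $[n]$ with $\theta_{\pi(1)}<\cdots<\theta_{\pi(n)}$. At time step $k$ an agent submits a query $(U_k,V_k)=(\theta_i,\theta_j)$, $i\neq j$, and receives $Y_k=\mathbb{1}_{\{U_k<V_k\}}\oplus Z_k$, with $Z_k$ i.i.d. $\mathrm{Bern}(p)$ independent of everything else. An adaptive querying strategy is a causal (possibly randomized) rule $(U_k,V_k)=f_k(Y^{k-1},U^{k-1},V^{k-1})$ with a stopping time $M$ (number of queries) which may depend on the responses. An $(R,n)$ noisy sorting code consists of such a strategy and an estimator $\hat\Pi=\hat\pi(Y^M,U^M,V^M)$, with $\mathbb{E}[M]=\frac{n\log_2 n}{R}$. A rate $R$ is achievable if there is a sequence (indexed by $n$) of $(R,n)$ noisy sorting codes with $\lim_{n\to\infty}\max_\pi\mathbb{P}\{\hat\Pi\neq\pi\}=0$; $C(p)$ is the supremum of achievable rates. $H(p)=-p\log_2 p-(1-p)\log_2(1-p)$. *)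

theory Defs
  imports "HOL-Probability.Probability" "HOL-Combinatorics.Permutations"
begin

text \<open>Items are labelled 0..n-1; the ordering is a permutation pi of
  {..<n}: item pi k is the k-th smallest, so item i is smaller than item j iff
  inv pi i < inv pi j.
  A history is the list of (query, response) triples (U_k, V_k, Y_k).\<close>

type_synonym ns_hist = "(nat \<times> nat \<times> bool) list"

text \<open>All the
  randomization of the agent is collected in a seed s drawn from a probability
  measure on the reals (seed_dist).\<close>

record ns_code =
  qry :: "real \<Rightarrow> ns_hist \<Rightarrow> nat \<times> nat"
  stp :: "real \<Rightarrow> ns_hist \<Rightarrow> bool"
  est :: "ns_hist \<Rightarrow> (nat \<Rightarrow> nat)"
  seed_dist :: "real measure"

text \<open>History after k queries, given ordering pi, seed s and noise stream z
  (z !! k = Z_{k+1}).  The response is 1{U<V} xor Z.\<close>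

fun ns_hist :: "(nat \<Rightarrow> nat) \<Rightarrow> ns_code \<Rightarrow> real \<Rightarrow> bool stream \<Rightarrow> nat \<Rightarrow> ns_hist" where
  "ns_hist \<pi> c s z 0 = []"
| "ns_hist \<pi> c s z (Suc k) =
     (let h = ns_hist \<pi> c s z k; q = qry c s h
      in h @ [(fst q, snd q, (inv \<pi> (fst q) < inv \<pi> (snd q)) \<noteq> z !! k)])"

definition ns_M :: "(nat \<Rightarrow> nat) \<Rightarrow> ns_code \<Rightarrow> real \<Rightarrow> bool stream \<Rightarrow> enat" where
  "ns_M \<pi> c s z =
     (if \<exists>k. stp c s (ns_hist \<pi> c s z k)
      then enat (LEAST k. stp c s (ns_hist \<pi> c s z k)) else \<infinity>)"

definition ns_space :: "real \<Rightarrow> ns_code \<Rightarrow> (real \<times> bool stream) measure" where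
  "ns_space p c = seed_dist c \<Otimes>\<^sub>M stream_space (measure_pmf (bernoulli_pmf p))"

definition ns_error :: "real \<Rightarrow> ns_code \<Rightarrow> (nat \<Rightarrow> nat) \<Rightarrow> real" where
  "ns_error p c \<pi> = measure (ns_space p c)
     {\<omega> \<in> space (ns_space p c).
        ns_M \<pi> c (fst \<omega>) (snd \<omega>) = \<infinity> \<or>
        est c (ns_hist \<pi> c (fst \<omega>) (snd \<omega>) (the_enat (ns_M \<pi> c (fst \<omega>) (snd \<omega>)))) \<noteq> \<pi>}"

definition ns_max_error :: "real \<Rightarrow> nat \<Rightarrow> ns_code \<Rightarrow> real" where
  "ns_max_error p n c = Max ((\<lambda>\<pi>. ns_error p c \<pi>) ` {\<pi>. \<pi> permutes {..<n}})"

definition is_ns_code :: "real \<Rightarrow> real \<Rightarrow> nat \<Rightarrow> ns_code \<Rightarrow> bool" where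
  "is_ns_code p R n c \<longleftrightarrow>
     prob_space (seed_dist c) \<and> sets (seed_dist c) = sets borel \<and>
     (\<forall>h. (\<lambda>s. qry c s h) \<in> measurable (seed_dist c) (count_space UNIV)) \<and>
     (\<forall>h. (\<lambda>s. stp c s h) \<in> measurable (seed_dist c) (count_space UNIV)) \<and>
     (\<forall>s h. fst (qry c s h) < n \<and> snd (qry c s h) < n \<and> fst (qry c s h) \<noteq> snd (qry c s h)) \<and>
     (\<forall>\<pi>. \<pi> permutes {..<n} \<longrightarrow>
        (\<integral>\<^sup>+ \<omega>. ennreal_of_enat (ns_M \<pi> c (fst \<omega>) (snd \<omega>)) \<partial>ns_space p c)
          \<le> ennreal (real n * log 2 (real n) / R))"

definition ns_achievable :: "real \<Rightarrow> real \<Rightarrow> bool" where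
  "ns_achievable p R \<longleftrightarrow> R > 0 \<and>
     (\<exists>c :: nat \<Rightarrow> ns_code. (\<forall>n\<ge>2. is_ns_code p R n (c n)) \<and>
        (\<lambda>n. ns_max_error p n (c n)) \<longlonglongrightarrow> 0)"

definition ns_capacity :: "real \<Rightarrow> ereal" where
  "ns_capacity p = Sup (ereal ` {R. ns_achievable p R})"

definition bin_entropy :: "real \<Rightarrow> real" where
  "bin_entropy p = - p * log 2 p - (1 - p) * log 2 (1 - p)"

end

theory Submission
  imports Defs
begin

(* Fix the seed of the agent. If the strategy stops within L queries with the correct estimate,
   the L responses determine the ordering (through the estimate) and the first L noise bits
   (queries depend only on past responses). So the pairs (ordering, noise word) decoded within
   L steps inject into {0,1}^L. A noise word with at least theta*L ones (theta slightly below p)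
   has probability at most 2^(-L(H(p) - delta)), and the remaining words have vanishing
   probability by Chebyshev. Averaging over the n! orderings, the probability of a correct
   decision within L steps is at most 2^(L(1 - H(p) + delta))/n! + P(few ones), and by Markov
   the probability of stopping later is at most E[M]/(L + 1). With L about mu n log2 n, where
   1/R < mu < 1/(1 - H(p) + delta), the first two terms vanish and the third stays below
   1/(mu R) < 1, so the error cannot vanish when R > 1 - H(p). *)

section \<open>Probabilities of noise words\<close>

definition word_pmf :: "'a pmf \<Rightarrow> 'a list \<Rightarrow> real" where
  "word_pmf q xs = (\<Prod>x\<leftarrow>xs. pmf q x)"

lemma word_pmf_Nil [simp]: "word_pmf q [] = 1"
  and word_pmf_Cons [simp]: "word_pmf q (x # xs) = pmf q x * word_pmf q xs"
  by (simp_all add: word_pmf_def)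

lemma word_pmf_nonneg: "0 \<le> word_pmf q xs"
  by (induction xs) auto

lemma finite_lists_length: "finite {xs :: 'a::finite list. length xs = L}"
  using finite_lists_length_eq[of "UNIV :: 'a set" L] by simp

lemma sum_lists_length_Suc:
  fixes f :: "'a::finite list \<Rightarrow> 'b::comm_monoid_add"
  shows "(\<Sum>xs\<in>{xs. length xs = Suc L}. f xs) = (\<Sum>x\<in>UNIV. \<Sum>xs\<in>{xs. length xs = L}. f (x # xs))"
proof -
  have lists_Suc: "{xs. length xs = Suc L} = (\<lambda>(x, xs). x # xs) ` (UNIV \<times> {xs. length xs = L})"
    by (auto simp: length_Suc_conv image_iff)
  have "(\<Sum>xs\<in>{xs. length xs = Suc L}. f xs) = (\<Sum>(x, xs)\<in>UNIV \<times> {xs. length xs = L}. f (x # xs))"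
    unfolding lists_Suc by (subst sum.reindex) (auto simp: inj_on_def split_def)
  then show ?thesis
    by (simp add: sum.cartesian_product)
qed

lemma sum_bool_lists_length_Suc:
  "(\<Sum>xs\<in>{xs. length xs = Suc L}. f xs) = (\<Sum>xs\<in>{xs. length xs = L}. f (True # xs) + f (False # xs))"
  by (simp add: sum_lists_length_Suc UNIV_bool sum.distrib add.commute)

lemma sum_word_pmf: "(\<Sum>xs\<in>{xs. length xs = L}. word_pmf (q :: 'a::finite pmf) xs) = 1"
proof (induction L)
  case 0
  have "{xs :: 'a list. length xs = 0} = {[]}" by auto
  then show ?case by simp
next
  case (Suc L)
  then show ?case
    by (simp add: sum_lists_length_Suc sum_distrib_left[symmetric] sum_distrib_right[symmetric] sum_pmf_eq_1)
qed

lemma nn_integral_stream_space_stake: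
  fixes q :: "'a::finite pmf" and g :: "'a list \<Rightarrow> ennreal"
  shows "(\<integral>\<^sup>+z. g (stake L z) \<partial>stream_space (measure_pmf q))
           = (\<Sum>xs\<in>{xs. length xs = L}. g xs * ennreal (word_pmf q xs))"
proof (induction L arbitrary: g)
  case 0
  interpret prob_space "stream_space (measure_pmf q)"
    by (rule prob_space.prob_space_stream_space) (rule prob_space_measure_pmf)
  have "{xs :: 'a list. length xs = 0} = {[]}" by auto
  then show ?case by (simp add: emeasure_space_1)
next
  case (Suc L)
  have "(\<integral>\<^sup>+z. g (stake (Suc L) z) \<partial>stream_space (measure_pmf q))
      = (\<integral>\<^sup>+x. (\<integral>\<^sup>+z. g (x # stake L z) \<partial>stream_space (measure_pmf q)) \<partial>measure_pmf q)"
    by (subst prob_space.nn_integral_stream_space) (auto intro: prob_space_measure_pmf)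
  also have "\<dots> = (\<integral>\<^sup>+x. (\<Sum>xs\<in>{xs. length xs = L}. g (x # xs) * ennreal (word_pmf q xs)) \<partial>measure_pmf q)"
    by (intro nn_integral_cong) (rule Suc.IH)
  also have "\<dots> = (\<Sum>x\<in>UNIV. (\<Sum>xs\<in>{xs. length xs = L}. g (x # xs) * ennreal (word_pmf q xs)) * ennreal (pmf q x))"
    by (rule nn_integral_measure_pmf_support) auto
  also have "\<dots> = (\<Sum>xs\<in>{xs. length xs = Suc L}. g xs * ennreal (word_pmf q xs))"
    by (simp add: sum_lists_length_Suc sum_distrib_left sum_distrib_right ennreal_mult' word_pmf_nonneg mult_ac)
  finally show ?case .
qed

lemma emeasure_stream_space_stake:
  fixes q :: "'a::finite pmf"
  assumes "W \<subseteq> {xs. length xs = L}"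
  shows "emeasure (stream_space (measure_pmf q)) {z. stake L z \<in> W} = ennreal (\<Sum>xs\<in>W. word_pmf q xs)"
proof -
  have "{z. stake L z \<in> W} \<in> sets (stream_space (measure_pmf q))"
  proof -
    have "{z \<in> space (stream_space (measure_pmf q)). stake L z \<in> W} \<in> sets (stream_space (measure_pmf q))"
      by measurable
    then show ?thesis by (simp add: space_stream_space)
  qed
  then have "emeasure (stream_space (measure_pmf q)) {z. stake L z \<in> W}
      = (\<integral>\<^sup>+z. indicator W (stake L z) \<partial>stream_space (measure_pmf q))"
    by (simp add: indicator_def flip: nn_integral_indicator)
  also have "\<dots> = (\<Sum>xs\<in>{xs. length xs = L}. indicator W xs * ennreal (word_pmf q xs))"
    by (rule nn_integral_stream_space_stake)
  also have "\<dots> = (\<Sum>xs\<in>W. ennreal (word_pmf q xs))"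
    using assms by (intro sum.mono_neutral_cong_right finite_lists_length) (auto simp: indicator_def)
  also have "\<dots> = ennreal (\<Sum>xs\<in>W. word_pmf q xs)"
    by (simp add: word_pmf_nonneg)
  finally show ?thesis .
qed

lemma word_pmf_bernoulli:
  assumes "0 \<le> p" "p \<le> 1"
  shows "word_pmf (bernoulli_pmf p) xs = p ^ count_list xs True * (1 - p) ^ count_list xs False"
  using assms by (induction xs) auto

lemma count_list_True_False: "count_list xs True + count_list xs False = length xs"
  by (induction xs) auto

lemma sum_bernoulli_word_pmf_ones:
  fixes p :: real
  assumes "0 \<le> p" "p \<le> 1"
  shows "(\<Sum>xs\<in>{xs. length xs = L}. word_pmf (bernoulli_pmf p) xs * count_list xs True) = L * p"
proof (induction L)
  case (Suc L)
  have "(\<Sum>xs\<in>{xs. length xs = Suc L}. word_pmf (bernoulli_pmf p) xs * count_list xs True)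
      = p * (\<Sum>xs\<in>{xs. length xs = L}. word_pmf (bernoulli_pmf p) xs)
        + (\<Sum>xs\<in>{xs. length xs = L}. word_pmf (bernoulli_pmf p) xs * count_list xs True)"
    using assms by (simp add: sum_bool_lists_length_Suc sum.distrib sum_distrib_left algebra_simps)
  then show ?case
    using Suc sum_word_pmf[of "bernoulli_pmf p" L] by (simp add: algebra_simps)
qed simp

lemma sum_bernoulli_word_pmf_ones_squared:
  fixes p :: real
  assumes "0 \<le> p" "p \<le> 1"
  shows "(\<Sum>xs\<in>{xs. length xs = L}. word_pmf (bernoulli_pmf p) xs * (count_list xs True)^2)
           = L * p + L * (L - 1) * p^2"
proof (induction L)
  case (Suc L)
  have "(\<Sum>xs\<in>{xs. length xs = Suc L}. word_pmf (bernoulli_pmf p) xs * (count_list xs True)^2)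
      = p * (\<Sum>xs\<in>{xs. length xs = L}. word_pmf (bernoulli_pmf p) xs)
        + 2 * p * (\<Sum>xs\<in>{xs. length xs = L}. word_pmf (bernoulli_pmf p) xs * count_list xs True)
        + (\<Sum>xs\<in>{xs. length xs = L}. word_pmf (bernoulli_pmf p) xs * (count_list xs True)^2)"
    using assms
    by (simp add: sum_bool_lists_length_Suc sum.distrib sum_distrib_left algebra_simps power2_eq_square)
  then show ?case
    using Suc sum_word_pmf[of "bernoulli_pmf p" L] sum_bernoulli_word_pmf_ones[OF assms, of L]
    by (simp add: algebra_simps power2_eq_square)
qed simp

lemma sum_bernoulli_word_pmf_variance:
  fixes p :: real
  assumes "0 \<le> p" "p \<le> 1"
  shows "(\<Sum>xs\<in>{xs. length xs = L}. word_pmf (bernoulli_pmf p) xs * (count_list xs True - L * p)^2)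
           = L * p * (1 - p)"
proof -
  have "(\<Sum>xs\<in>{xs. length xs = L}. word_pmf (bernoulli_pmf p) xs * (count_list xs True - L * p)^2)
      = (\<Sum>xs\<in>{xs. length xs = L}. word_pmf (bernoulli_pmf p) xs * (count_list xs True)^2)
        - 2 * L * p * (\<Sum>xs\<in>{xs. length xs = L}. word_pmf (bernoulli_pmf p) xs * count_list xs True)
        + (L * p)^2 * (\<Sum>xs\<in>{xs. length xs = L}. word_pmf (bernoulli_pmf p) xs)"
    by (simp add: power2_diff sum.distrib sum_subtractf sum_distrib_left algebra_simps)
  then show ?thesis
    using sum_word_pmf[of "bernoulli_pmf p" L] sum_bernoulli_word_pmf_ones[OF assms, of L]
      sum_bernoulli_word_pmf_ones_squared[OF assms, of L]
    by (simp add: algebra_simps power2_eq_square)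
qed

lemma sum_bernoulli_word_pmf_few_ones_le:
  fixes p \<theta> :: real
  assumes p: "0 \<le> p" "p \<le> 1" and \<theta>: "\<theta> < p" and L: "0 < L"
  shows "(\<Sum>xs\<in>{xs. length xs = L \<and> count_list xs True < \<theta> * L}. word_pmf (bernoulli_pmf p) xs)
           \<le> p * (1 - p) / ((p - \<theta>)^2 * L)"
proof -
  define d where "d = (p - \<theta>)^2 * (real L)^2"
  have d: "0 < d" using \<theta> L by (simp add: d_def)
  let ?w = "word_pmf (bernoulli_pmf p)" and ?dev = "\<lambda>xs. (count_list xs True - L * p)^2"
  have "(\<Sum>xs\<in>{xs. length xs = L \<and> count_list xs True < \<theta> * L}. ?w xs)
      \<le> (\<Sum>xs\<in>{xs. length xs = L \<and> count_list xs True < \<theta> * L}. ?w xs * ?dev xs / d)"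
  proof (rule sum_mono)
    fix xs assume "xs \<in> {xs. length xs = L \<and> count_list xs True < \<theta> * L}"
    then have "(p - \<theta>) * L \<le> L * p - count_list xs True"
      by (simp add: algebra_simps)
    then have "((p - \<theta>) * L)^2 \<le> (L * p - count_list xs True)^2"
      using \<theta> by (intro power_mono) simp_all
    then have "d \<le> ?dev xs"
      by (simp add: d_def power_mult_distrib power2_commute)
    then show "?w xs \<le> ?w xs * ?dev xs / d"
      using d word_pmf_nonneg[of "bernoulli_pmf p" xs]
      by (simp add: le_divide_eq mult_left_mono)
  qed
  also have "\<dots> \<le> (\<Sum>xs\<in>{xs. length xs = L}. ?w xs * ?dev xs / d)"
    using d by (intro sum_mono2 finite_lists_length)
      (auto intro!: divide_nonneg_pos mult_nonneg_nonneg word_pmf_nonneg)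
  also have "\<dots> = L * p * (1 - p) / d"
    by (simp add: sum_divide_distrib[symmetric] sum_bernoulli_word_pmf_variance[OF p])
  also have "\<dots> = p * (1 - p) / ((p - \<theta>)^2 * L)"
    using L by (simp add: d_def power2_eq_square)
  finally show ?thesis .
qed

lemma sum_bernoulli_word_pmf_few_ones_tendsto_0:
  fixes p \<theta> :: real
  assumes p: "0 \<le> p" "p \<le> 1" and \<theta>: "\<theta> < p"
  shows "(\<lambda>L. \<Sum>xs\<in>{xs. length xs = L \<and> count_list xs True < \<theta> * L}. word_pmf (bernoulli_pmf p) xs)
           \<longlonglongrightarrow> 0"
  (is "?S \<longlonglongrightarrow> 0")
proof (rule tendsto_sandwich)
  show "\<forall>\<^sub>F L in sequentially. 0 \<le> ?S L"
    by (simp add: sum_nonneg word_pmf_nonneg)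
  show "\<forall>\<^sub>F L in sequentially. ?S L \<le> p * (1 - p) / (p - \<theta>)^2 / L"
    using eventually_gt_at_top[of 0]
    by eventually_elim (use sum_bernoulli_word_pmf_few_ones_le[OF p \<theta>] in simp)
  show "(\<lambda>L. p * (1 - p) / (p - \<theta>)^2 / real L) \<longlonglongrightarrow> 0"
    by (rule lim_const_over_n)
qed simp

lemma word_pmf_le_1: "word_pmf q xs \<le> 1"
  by (induction xs) (auto intro: mult_le_one pmf_le_1 word_pmf_nonneg)

lemma power_eq_two_powr_log:
  fixes x :: real
  assumes "0 < x"
  shows "x ^ k = 2 powr (k * log 2 x)"
proof -
  have "x ^ k = (2 powr log 2 x) powr k"
    using assms by (simp add: powr_realpow)
  then show ?thesis
    by (simp add: powr_powr mult.commute)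
qed

lemma bernoulli_word_pmf_typical_le:
  fixes p \<delta> :: real
  assumes p: "0 \<le> p" "p < 1/2" and \<delta>: "0 < \<delta>"
  obtains \<theta> :: real where "\<theta> < p" and "\<And>xs. \<theta> * length xs \<le> count_list xs True \<Longrightarrow>
           word_pmf (bernoulli_pmf p) xs \<le> 2 powr (length xs * (\<delta> - bin_entropy p))"
proof (cases "p = 0")
  case True
  then have "bin_entropy p = 0" by (simp add: bin_entropy_def)
  with p \<delta> show ?thesis
    by (intro that[of "-1"]) (auto intro!: order.trans[OF word_pmf_le_1] ge_one_powr_ge_zero)
next
  case False
  define a where "a = log 2 p"
  define b where "b = log 2 (1 - p)"
  have "0 < p" using p False by simp
  then have ab: "a < b" using p by (simp add: a_def b_def)
  show ?thesis
  proof
    show "p - \<delta> / (b - a) < p" using ab \<delta> by simp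
  next
    fix xs :: "bool list"
    assume few: "(p - \<delta> / (b - a)) * length xs \<le> count_list xs True"
    have "word_pmf (bernoulli_pmf p) xs = 2 powr (count_list xs True * a + count_list xs False * b)"
      using p \<open>0 < p\<close> by (simp add: word_pmf_bernoulli power_eq_two_powr_log powr_add a_def b_def)
    also have "\<dots> \<le> 2 powr (length xs * (\<delta> - bin_entropy p))"
    proof (rule powr_mono)
      have "count_list xs True * a + count_list xs False * b
          = length xs * b - count_list xs True * (b - a)"
        using count_list_True_False[of xs, symmetric] by (simp add: algebra_simps)
      also have "\<dots> \<le> length xs * b - (p - \<delta> / (b - a)) * length xs * (b - a)"
        using few ab by (simp add: mult_right_mono)
      also have "\<dots> = length xs * (\<delta> - bin_entropy p)"
        using ab by (simp add: bin_entropy_def flip: a_def b_def) (simp add: field_simps)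
      finally show "count_list xs True * a + count_list xs False * b \<le> length xs * (\<delta> - bin_entropy p)" .
    qed simp
    finally show "word_pmf (bernoulli_pmf p) xs \<le> 2 powr (length xs * (\<delta> - bin_entropy p))" .
  qed
qed

section \<open>Histories are determined by the responses\<close>

definition responses :: "ns_hist \<Rightarrow> bool list" where
  "responses h = map (\<lambda>(_, _, y). y) h"

lemma length_ns_hist [simp]: "length (ns_hist \<pi> c s z k) = k"
  by (induction k) (simp_all add: Let_def)

lemma take_ns_hist: "k \<le> k' \<Longrightarrow> take k (ns_hist \<pi> c s z k') = ns_hist \<pi> c s z k"
proof (induction k')
  case (Suc k')
  then show ?case
    by (cases "k = Suc k'") (simp_all add: Let_def)
qed simp

lemma nth_responses_ns_hist:
  assumes "i < k"
  shows "responses (ns_hist \<pi> c s z k) ! i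
           = ((inv \<pi> (fst (qry c s (ns_hist \<pi> c s z i))) < inv \<pi> (snd (qry c s (ns_hist \<pi> c s z i))))
              \<noteq> z !! i)"
proof -
  have "ns_hist \<pi> c s z k ! i = take (Suc i) (ns_hist \<pi> c s z k) ! i" by simp
  also have "\<dots> = ns_hist \<pi> c s z (Suc i) ! i" using assms by (simp add: take_ns_hist)
  finally show ?thesis
    using assms by (simp add: responses_def Let_def split_def nth_append)
qed

lemma ns_hist_eq_if_responses_eq:
  "responses (ns_hist \<pi> c s z k) = responses (ns_hist \<pi>' c s z' k) \<Longrightarrow>
     ns_hist \<pi> c s z k = ns_hist \<pi>' c s z' k"
  by (induction k) (auto simp: Let_def responses_def)

lemma ns_hist_cong_stake: "stake k z = stake k z' \<Longrightarrow> ns_hist \<pi> c s z k = ns_hist \<pi> c s z' k"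
proof (induction k)
  case (Suc k)
  then have "stake k z = stake k z'" and "z !! k = z' !! k"
    by (metis stake_Suc append1_eq_conv)+
  with Suc.IH show ?case by (simp add: Let_def)
qed simp

definition stops_correctly :: "(nat \<Rightarrow> nat) \<Rightarrow> ns_code \<Rightarrow> real \<Rightarrow> bool stream \<Rightarrow> nat \<Rightarrow> bool" where
  "stops_correctly \<pi> c s z k \<longleftrightarrow>
     stp c s (ns_hist \<pi> c s z k) \<and> (\<forall>j<k. \<not> stp c s (ns_hist \<pi> c s z j)) \<and>
     est c (ns_hist \<pi> c s z k) = \<pi>"

lemma ns_M_eq_enat_iff:
  "ns_M \<pi> c s z = enat k \<longleftrightarrow> stp c s (ns_hist \<pi> c s z k) \<and> (\<forall>j<k. \<not> stp c s (ns_hist \<pi> c s z j))"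
proof -
  have "(LEAST k. stp c s (ns_hist \<pi> c s z k)) = k \<longleftrightarrow>
      stp c s (ns_hist \<pi> c s z k) \<and> (\<forall>j<k. \<not> stp c s (ns_hist \<pi> c s z j))"
    if "stp c s (ns_hist \<pi> c s z k')" for k'
    using that by (metis (mono_tags, lifting) LeastI Least_equality not_le_imp_less not_less_Least)
  then show ?thesis by (auto simp: ns_M_def)
qed

lemma ns_M_correct_iff:
  "ns_M \<pi> c s z \<noteq> \<infinity> \<and> est c (ns_hist \<pi> c s z (the_enat (ns_M \<pi> c s z))) = \<pi>
     \<longleftrightarrow> (\<exists>k. stops_correctly \<pi> c s z k)"
proof -
  have "(\<exists>k. stops_correctly \<pi> c s z k) \<longleftrightarrow>
      (\<exists>k. ns_M \<pi> c s z = enat k \<and> est c (ns_hist \<pi> c s z k) = \<pi>)"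
    by (simp add: stops_correctly_def ns_M_eq_enat_iff)
  then show ?thesis by (cases "ns_M \<pi> c s z") auto
qed

lemma ns_M_ge_if_no_stop:
  assumes "\<forall>k\<le>L. \<not> stp c s (ns_hist \<pi> c s z k)"
  shows "enat (Suc L) \<le> ns_M \<pi> c s z"
proof (cases "ns_M \<pi> c s z")
  case (enat k)
  then have "stp c s (ns_hist \<pi> c s z k)" by (simp add: ns_M_eq_enat_iff)
  with assms have "L < k" by (meson not_le)
  with enat show ?thesis by simp
qed simp

lemma stops_correctly_cong_stake:
  assumes "stake k z = stake k z'"
  shows "stops_correctly \<pi> c s z k \<longleftrightarrow> stops_correctly \<pi> c s z' k"
proof -
  have "ns_hist \<pi> c s z j = ns_hist \<pi> c s z' j" if "j \<le> k" for j
    using ns_hist_cong_stake[of j z z'] take_stake[of j k] assms that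
    by (metis min.absorb1)
  then show ?thesis by (simp add: stops_correctly_def)
qed

text \<open>Equal responses give equal histories, hence the same stopping time and estimate;
  with the ordering fixed, each response then reveals its noise bit.\<close>

lemma stops_correctly_responses_inj:
  assumes stop: "stops_correctly \<pi> c s z k" "stops_correctly \<pi>' c s z' k'" "k \<le> L" "k' \<le> L"
    and resp: "responses (ns_hist \<pi> c s z L) = responses (ns_hist \<pi>' c s z' L)"
  shows "\<pi> = \<pi>' \<and> stake L z = stake L z'"
proof -
  have hist_eq: "ns_hist \<pi> c s z j = ns_hist \<pi>' c s z' j" if "j \<le> L" for j
    using ns_hist_eq_if_responses_eq[OF resp] take_ns_hist[OF that] by metis
  have "k = k'"
    using stop hist_eq by (metis stops_correctly_def linorder_neqE_nat)
  then have "\<pi> = \<pi>'"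
    using stop hist_eq by (metis stops_correctly_def)
  moreover have "z !! i = z' !! i" if "i < L" for i
  proof -
    let ?q = "qry c s (ns_hist \<pi> c s z i)"
    have "((inv \<pi> (fst ?q) < inv \<pi> (snd ?q)) \<noteq> z !! i) = ((inv \<pi> (fst ?q) < inv \<pi> (snd ?q)) \<noteq> z' !! i)"
      using nth_responses_ns_hist[OF that, of \<pi> c s z] nth_responses_ns_hist[OF that, of \<pi>' c s z']
        resp hist_eq[of i] that \<open>\<pi> = \<pi>'\<close> by simp
    then show ?thesis by auto
  qed
  then have "stake L z = stake L z'"
    by (intro nth_equalityI) simp_all
  ultimately show ?thesis by simp
qed

lemma sum_split_by_threshold:
  fixes w :: "'b \<Rightarrow> real" and \<tau> :: real
  assumes "finite P" "finite X" "A \<subseteq> P \<times> X" and w: "\<And>x. x \<in> X \<Longrightarrow> 0 \<le> w x" and "0 \<le> \<tau>"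
    and light: "\<And>x. x \<in> X \<Longrightarrow> \<not> heavy x \<Longrightarrow> w x \<le> \<tau>"
  shows "(\<Sum>(a, x)\<in>A. w x) \<le> \<tau> * card A + card P * (\<Sum>x\<in>{x\<in>X. heavy x}. w x)"
proof -
  have "(\<Sum>(a, x)\<in>A. w x) \<le> (\<Sum>(a, x)\<in>A. \<tau> + (if heavy x then w x else 0))"
    using assms(3) w light \<open>0 \<le> \<tau>\<close> by (intro sum_mono) (auto split: prod.splits)
  also have "\<dots> = \<tau> * card A + (\<Sum>(a, x)\<in>A. if heavy x then w x else 0)"
    by (simp add: sum.distrib split_def)
  also have "(\<Sum>(a, x)\<in>A. if heavy x then w x else 0) \<le> (\<Sum>(a, x)\<in>P \<times> X. if heavy x then w x else 0)"
    using assms(1-3) w by (intro sum_mono2) auto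
  also have "\<dots> = card P * (\<Sum>x\<in>{x\<in>X. heavy x}. w x)"
    using assms(2) by (simp add: sum.cartesian_product[symmetric] sum.inter_filter)
  finally show ?thesis by simp
qed

text \<open>Only the first \<open>L\<close> noise bits matter (\<open>stake_in_decoding_words_iff\<close>);
  the tail \<open>sconst False\<close> is an arbitrary filler.\<close>

definition decoding_words :: "(nat \<Rightarrow> nat) \<Rightarrow> ns_code \<Rightarrow> real \<Rightarrow> nat \<Rightarrow> bool list set" where
  "decoding_words \<pi> c s L =
     {xs. length xs = L \<and> (\<exists>k\<le>L. stops_correctly \<pi> c s (xs @- sconst False) k)}"

lemma decoding_words_subset: "decoding_words \<pi> c s L \<subseteq> {xs. length xs = L}"
  by (auto simp: decoding_words_def)

lemma stake_in_decoding_words_iff: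
  "stake L z \<in> decoding_words \<pi> c s L \<longleftrightarrow> (\<exists>k\<le>L. stops_correctly \<pi> c s z k)"
proof -
  have "stops_correctly \<pi> c s (stake L z @- sconst False) k \<longleftrightarrow> stops_correctly \<pi> c s z k" if "k \<le> L" for k
    using that by (intro stops_correctly_cong_stake) (simp add: stake_shift take_stake min_def)
  then show ?thesis by (auto simp: decoding_words_def)
qed

lemma card_lists_length: "card {xs :: 'a::finite list. length xs = L} = CARD('a) ^ L"
  using card_lists_length_eq[of "UNIV :: 'a set" L] by simp

lemma card_decoding_words_le:
  "card (Sigma P (\<lambda>\<pi>. decoding_words \<pi> c s L)) \<le> 2 ^ L"
proof -
  let ?A = "Sigma P (\<lambda>\<pi>. decoding_words \<pi> c s L)"
  let ?f = "\<lambda>(\<pi>, xs). responses (ns_hist \<pi> c s (xs @- sconst False) L)"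
  have "\<pi> = \<pi>' \<and> xs = xs'"
    if "(\<pi>, xs) \<in> ?A" "(\<pi>', xs') \<in> ?A" and resp: "?f (\<pi>, xs) = ?f (\<pi>', xs')" for \<pi> xs \<pi>' xs'
  proof -
    from that obtain k k' where len: "length xs = L" "length xs' = L" and "k \<le> L" "k' \<le> L"
      and stop: "stops_correctly \<pi> c s (xs @- sconst False) k" "stops_correctly \<pi>' c s (xs' @- sconst False) k'"
      by (auto simp: decoding_words_def)
    have "\<pi> = \<pi>' \<and> stake L (xs @- sconst False) = stake L (xs' @- sconst False)"
      using stops_correctly_responses_inj[OF stop \<open>k \<le> L\<close> \<open>k' \<le> L\<close>] resp by simp
    with len show ?thesis by (simp add: stake_shift)
  qed
  then have "inj_on ?f ?A"
    by (intro inj_onI) auto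
  moreover have "?f ` ?A \<subseteq> {ys. length ys = L}"
    by (auto simp: responses_def)
  ultimately have "card ?A \<le> card {ys :: bool list. length ys = L}"
    by (intro card_inj_on_le finite_lists_length)
  then show ?thesis by (simp add: card_lists_length)
qed

lemma sum_decoding_words_le:
  fixes P :: "(nat \<Rightarrow> nat) set" and q :: "bool pmf"
  assumes "finite P" and "0 \<le> \<tau>" and light: "\<And>xs. length xs = L \<Longrightarrow> \<not> atyp xs \<Longrightarrow> word_pmf q xs \<le> \<tau>"
  shows "(\<Sum>\<pi>\<in>P. \<Sum>xs\<in>decoding_words \<pi> c s L. word_pmf q xs)
           \<le> \<tau> * 2 ^ L + card P * (\<Sum>xs\<in>{xs. length xs = L \<and> atyp xs}. word_pmf q xs)"
proof -
  let ?A = "Sigma P (\<lambda>\<pi>. decoding_words \<pi> c s L)"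
  note sub = decoding_words_subset[of _ c s L]
  have "(\<Sum>\<pi>\<in>P. \<Sum>xs\<in>decoding_words \<pi> c s L. word_pmf q xs) = (\<Sum>(\<pi>, xs)\<in>?A. word_pmf q xs)"
    using \<open>finite P\<close> sub by (intro sum.Sigma) (auto intro: finite_subset[OF sub finite_lists_length])
  also have "\<dots> \<le> \<tau> * card ?A + card P * (\<Sum>xs\<in>{xs \<in> {xs. length xs = L}. atyp xs}. word_pmf q xs)"
    using sub light \<open>0 \<le> \<tau>\<close>
    by (intro sum_split_by_threshold[OF \<open>finite P\<close> finite_lists_length]) (auto simp: word_pmf_nonneg)
  finally have "(\<Sum>\<pi>\<in>P. \<Sum>xs\<in>decoding_words \<pi> c s L. word_pmf q xs)
      \<le> \<tau> * card ?A + card P * (\<Sum>xs\<in>{xs. length xs = L \<and> atyp xs}. word_pmf q xs)"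
    by simp
  moreover have "\<tau> * card ?A \<le> \<tau> * 2 ^ L"
    using card_decoding_words_le \<open>0 \<le> \<tau>\<close> by (intro mult_left_mono) (simp_all add: of_nat_le_iff[symmetric])
  ultimately show ?thesis by linarith
qed

section \<open>The error of a single code\<close>

lemma measurable_ns_hist [measurable]:
  assumes [measurable]: "\<And>h. (\<lambda>s. qry c s h) \<in> measurable (seed_dist c) (count_space UNIV)"
  shows "(\<lambda>\<omega>. ns_hist \<pi> c (fst \<omega>) (snd \<omega>) k) \<in> measurable (ns_space p c) (count_space UNIV)"
proof (induction k)
  case (Suc k)
  have [measurable]: "(\<lambda>\<omega>. qry c (fst \<omega>) h) \<in> measurable (ns_space p c) (count_space UNIV)" for h
    unfolding ns_space_def by measurable
  have [measurable]: "(\<lambda>\<omega>. snd \<omega> !! k) \<in> measurable (ns_space p c) (count_space UNIV)"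
    unfolding ns_space_def by measurable
  show ?case
    using Suc by (simp add: Let_def) measurable
qed simp

locale noisy_sorting_code =
  fixes p R :: real and n :: nat and c :: ns_code
  assumes code: "is_ns_code p R n c" and p: "0 \<le> p" "p \<le> 1" and R: "0 < R" and n: "1 \<le> n"
begin

abbreviation noise :: "bool stream measure" where
  "noise \<equiv> stream_space (measure_pmf (bernoulli_pmf p))"

sublocale pair_prob_space "seed_dist c" noise
proof -
  interpret seed: prob_space "seed_dist c"
    using code by (simp add: is_ns_code_def)
  interpret noise_space: prob_space noise
    by (intro prob_space.prob_space_stream_space prob_space_measure_pmf)
  show "pair_prob_space (seed_dist c) noise" ..
qed

lemma ns_space_eq: "ns_space p c = seed_dist c \<Otimes>\<^sub>M noise"
  by (simp add: ns_space_def)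

lemma qry_measurable [measurable]: "(\<lambda>s. qry c s h) \<in> measurable (seed_dist c) (count_space UNIV)"
  and stp_measurable [measurable]: "(\<lambda>s. stp c s h) \<in> measurable (seed_dist c) (count_space UNIV)"
  using code by (simp_all add: is_ns_code_def)

lemma pred_stp_ns_hist [measurable]:
  "Measurable.pred (ns_space p c) (\<lambda>\<omega>. stp c (fst \<omega>) (ns_hist \<pi> c (fst \<omega>) (snd \<omega>) k))"
proof -
  have [measurable]: "(\<lambda>\<omega>. stp c (fst \<omega>) h) \<in> measurable (ns_space p c) (count_space UNIV)" for h
    unfolding ns_space_def by measurable
  show ?thesis by measurable
qed

lemma pred_stops_correctly [measurable]:
  "Measurable.pred (ns_space p c) (\<lambda>\<omega>. stops_correctly \<pi> c (fst \<omega>) (snd \<omega>) k)"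
  unfolding stops_correctly_def by measurable

definition success :: "(nat \<Rightarrow> nat) \<Rightarrow> (real \<times> bool stream) set" where
  "success \<pi> = {\<omega> \<in> space (ns_space p c). \<exists>k. stops_correctly \<pi> c (fst \<omega>) (snd \<omega>) k}"

definition success_within :: "(nat \<Rightarrow> nat) \<Rightarrow> nat \<Rightarrow> (real \<times> bool stream) set" where
  "success_within \<pi> L =
     {\<omega> \<in> space (ns_space p c). \<exists>k\<le>L. stops_correctly \<pi> c (fst \<omega>) (snd \<omega>) k}"

definition no_stop_within :: "(nat \<Rightarrow> nat) \<Rightarrow> nat \<Rightarrow> (real \<times> bool stream) set" where
  "no_stop_within \<pi> L =
     {\<omega> \<in> space (ns_space p c). \<forall>k\<le>L. \<not> stp c (fst \<omega>) (ns_hist \<pi> c (fst \<omega>) (snd \<omega>) k)}"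

lemma sets_success [measurable]: "success \<pi> \<in> sets (ns_space p c)"
  unfolding success_def by measurable

lemma sets_success_within [measurable]: "success_within \<pi> L \<in> sets (ns_space p c)"
  unfolding success_within_def by measurable

lemma sets_no_stop_within [measurable]: "no_stop_within \<pi> L \<in> sets (ns_space p c)"
  unfolding no_stop_within_def by measurable

lemma success_subset: "success \<pi> \<subseteq> success_within \<pi> L \<union> no_stop_within \<pi> L"
proof
  fix \<omega> assume "\<omega> \<in> success \<pi>"
  then obtain k where "\<omega> \<in> space (ns_space p c)" and k: "stops_correctly \<pi> c (fst \<omega>) (snd \<omega>) k"
    by (auto simp: success_def)
  then show "\<omega> \<in> success_within \<pi> L \<union> no_stop_within \<pi> L"
    by (cases "k \<le> L") (auto simp: success_within_def no_stop_within_def stops_correctly_def)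
qed

lemma ns_error_eq: "ns_error p c \<pi> = 1 - measure (ns_space p c) (success \<pi>)"
proof -
  have "{\<omega> \<in> space (ns_space p c). ns_M \<pi> c (fst \<omega>) (snd \<omega>) = \<infinity> \<or>
          est c (ns_hist \<pi> c (fst \<omega>) (snd \<omega>) (the_enat (ns_M \<pi> c (fst \<omega>) (snd \<omega>)))) \<noteq> \<pi>}
      = space (ns_space p c) - success \<pi>"
    unfolding success_def using ns_M_correct_iff[of \<pi> c] by blast
  then show ?thesis
    using sets_success[of \<pi>] unfolding ns_error_def ns_space_eq by (simp add: prob_compl)
qed

lemma measure_no_stop_within_le:
  assumes "\<pi> permutes {..<n}"
  shows "measure (ns_space p c) (no_stop_within \<pi> L) \<le> real n * log 2 (real n) / R / (real L + 1)"
proof -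
  define m where "m = real n * log 2 (real n) / R"
  have "0 \<le> m" using n R by (simp add: m_def)
  have "ennreal (real L + 1) * emeasure (ns_space p c) (no_stop_within \<pi> L)
      = (\<integral>\<^sup>+\<omega>. ennreal (real L + 1) * indicator (no_stop_within \<pi> L) \<omega> \<partial>ns_space p c)"
    by (rule nn_integral_cmult_indicator[symmetric, OF sets_no_stop_within])
  also have "\<dots> \<le> (\<integral>\<^sup>+\<omega>. ennreal_of_enat (ns_M \<pi> c (fst \<omega>) (snd \<omega>)) \<partial>ns_space p c)"
  proof (intro nn_integral_mono)
    fix \<omega>
    show "ennreal (real L + 1) * indicator (no_stop_within \<pi> L) \<omega>
        \<le> ennreal_of_enat (ns_M \<pi> c (fst \<omega>) (snd \<omega>))"
    proof (cases "\<omega> \<in> no_stop_within \<pi> L")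
      case True
      then have "ennreal_of_enat (enat (Suc L)) \<le> ennreal_of_enat (ns_M \<pi> c (fst \<omega>) (snd \<omega>))"
        by (intro ennreal_of_enat_le_iff[THEN iffD2] ns_M_ge_if_no_stop) (simp add: no_stop_within_def)
      with True show ?thesis
        by (simp add: ennreal_of_nat_eq_real_of_nat add.commute)
    qed simp
  qed
  also have "\<dots> \<le> ennreal m"
    using code assms by (simp add: is_ns_code_def m_def)
  finally have "ennreal ((real L + 1) * measure (ns_space p c) (no_stop_within \<pi> L)) \<le> ennreal m"
    by (simp add: ns_space_eq emeasure_eq_measure ennreal_mult'')
  then have "(real L + 1) * measure (ns_space p c) (no_stop_within \<pi> L) \<le> m"
    using \<open>0 \<le> m\<close> by (simp add: ennreal_le_iff)
  then have "measure (ns_space p c) (no_stop_within \<pi> L) \<le> m / (real L + 1)"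
    by (simp add: pos_le_divide_eq mult.commute)
  then show ?thesis by (simp add: m_def)
qed

lemma emeasure_success_within_Pair:
  assumes "s \<in> space (seed_dist c)"
  shows "emeasure noise (Pair s -` success_within \<pi> L)
           = ennreal (\<Sum>xs\<in>decoding_words \<pi> c s L. word_pmf (bernoulli_pmf p) xs)"
proof -
  have "Pair s -` success_within \<pi> L = {z. stake L z \<in> decoding_words \<pi> c s L}"
    using assms
    by (auto simp: success_within_def stake_in_decoding_words_iff ns_space_eq space_pair_measure space_stream_space)
  then show ?thesis
    by (simp add: emeasure_stream_space_stake decoding_words_subset)
qed

lemma sum_measure_success_within_le:
  assumes "finite P" and "0 \<le> \<tau>"
    and light: "\<And>xs. length xs = L \<Longrightarrow> \<not> atyp xs \<Longrightarrow> word_pmf (bernoulli_pmf p) xs \<le> \<tau>"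
  shows "(\<Sum>\<pi>\<in>P. measure (ns_space p c) (success_within \<pi> L))
           \<le> \<tau> * 2 ^ L + card P * (\<Sum>xs\<in>{xs. length xs = L \<and> atyp xs}. word_pmf (bernoulli_pmf p) xs)"
    (is "_ \<le> ?B")
proof -
  have "0 \<le> ?B"
    using \<open>0 \<le> \<tau>\<close> by (intro add_nonneg_nonneg mult_nonneg_nonneg sum_nonneg word_pmf_nonneg) simp_all
  have "ennreal (\<Sum>\<pi>\<in>P. measure (ns_space p c) (success_within \<pi> L))
      = (\<Sum>\<pi>\<in>P. emeasure (ns_space p c) (success_within \<pi> L))"
    by (simp add: ns_space_eq emeasure_eq_measure sum_ennreal)
  also have "\<dots> = (\<Sum>\<pi>\<in>P. \<integral>\<^sup>+s. emeasure noise (Pair s -` success_within \<pi> L) \<partial>seed_dist c)"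
    using sets_success_within unfolding ns_space_eq by (simp add: M2.emeasure_pair_measure_alt)
  also have "\<dots> = (\<integral>\<^sup>+s. (\<Sum>\<pi>\<in>P. emeasure noise (Pair s -` success_within \<pi> L)) \<partial>seed_dist c)"
    using sets_success_within unfolding ns_space_eq
    by (intro nn_integral_sum[symmetric] M2.measurable_emeasure_Pair) simp
  also have "\<dots> \<le> (\<integral>\<^sup>+s. ennreal ?B \<partial>seed_dist c)"
  proof (intro nn_integral_mono)
    fix s assume "s \<in> space (seed_dist c)"
    then have "(\<Sum>\<pi>\<in>P. emeasure noise (Pair s -` success_within \<pi> L))
        = ennreal (\<Sum>\<pi>\<in>P. \<Sum>xs\<in>decoding_words \<pi> c s L. word_pmf (bernoulli_pmf p) xs)"
      by (simp add: emeasure_success_within_Pair sum_nonneg word_pmf_nonneg sum_ennreal)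
    also have "\<dots> \<le> ennreal ?B"
      by (intro ennreal_leI sum_decoding_words_le[OF \<open>finite P\<close> \<open>0 \<le> \<tau>\<close> light])
    finally show "(\<Sum>\<pi>\<in>P. emeasure noise (Pair s -` success_within \<pi> L))
        \<le> ennreal ?B" .
  qed
  also have "\<dots> = ennreal ?B"
    by (simp add: M1.emeasure_space_1)
  finally show ?thesis
    using \<open>0 \<le> ?B\<close> by (simp add: ennreal_le_iff)
qed

lemma ns_error_ge:
  assumes "\<pi> permutes {..<n}"
  shows "1 - real n * log 2 (real n) / R / (real L + 1) - measure (ns_space p c) (success_within \<pi> L)
           \<le> ns_error p c \<pi>"
proof -
  have "measure (ns_space p c) (success \<pi>) \<le> measure (ns_space p c) (success_within \<pi> L \<union> no_stop_within \<pi> L)"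
    using success_subset[of \<pi> L] sets_success_within[of \<pi> L] sets_no_stop_within[of \<pi> L]
    unfolding ns_space_eq by (intro finite_measure_mono) simp_all
  also have "\<dots> \<le> measure (ns_space p c) (success_within \<pi> L) + measure (ns_space p c) (no_stop_within \<pi> L)"
    by (intro measure_Un_le sets_success_within sets_no_stop_within)
  finally show ?thesis
    using measure_no_stop_within_le[OF assms, of L] ns_error_eq[of \<pi>] by linarith
qed

lemma ns_max_error_ge:
  assumes "0 \<le> \<tau>" and light: "\<And>xs. length xs = L \<Longrightarrow> \<not> atyp xs \<Longrightarrow> word_pmf (bernoulli_pmf p) xs \<le> \<tau>"
  shows "1 - \<tau> * 2 ^ L / fact n - (\<Sum>xs\<in>{xs. length xs = L \<and> atyp xs}. word_pmf (bernoulli_pmf p) xs)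
           - real n * log 2 (real n) / R / (real L + 1) \<le> ns_max_error p n c"
proof -
  define P where "P = {\<pi>. \<pi> permutes {..<n}}"
  define \<beta> where "\<beta> = (\<Sum>xs\<in>{xs. length xs = L \<and> atyp xs}. word_pmf (bernoulli_pmf p) xs)"
  define t where "t = real n * log 2 (real n) / R / (real L + 1)"
  have "finite P" and card_P: "card P = fact n"
    using finite_permutations[of "{..<n}"] card_permutations[of "{..<n}" n] by (simp_all add: P_def)
  have "real (card P) * (1 - t) - (\<tau> * 2 ^ L + card P * \<beta>)
      \<le> (\<Sum>\<pi>\<in>P. 1 - t) - (\<Sum>\<pi>\<in>P. measure (ns_space p c) (success_within \<pi> L))"
    using sum_measure_success_within_le[where L = L and atyp = atyp, OF \<open>finite P\<close> \<open>0 \<le> \<tau>\<close> light]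
    by (simp add: \<beta>_def)
  also have "\<dots> \<le> (\<Sum>\<pi>\<in>P. ns_error p c \<pi>)"
    unfolding sum_subtractf[symmetric] t_def by (intro sum_mono ns_error_ge) (simp add: P_def)
  also have "\<dots> \<le> (\<Sum>\<pi>\<in>P. ns_max_error p n c)"
    unfolding ns_max_error_def P_def[symmetric] using \<open>finite P\<close> by (intro sum_mono Max_ge) auto
  finally have "fact n * (1 - t - \<beta>) - \<tau> * 2 ^ L \<le> fact n * ns_max_error p n c"
    by (simp add: card_P algebra_simps)
  then have "1 - t - \<beta> - \<tau> * 2 ^ L / fact n \<le> ns_max_error p n c"
    by (simp add: field_simps)
  then show ?thesis by (simp add: \<beta>_def t_def)
qed

lemma ns_max_error_ge_entropy:
  fixes \<theta> \<delta> :: real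
  assumes typical: "\<And>xs. \<theta> * length xs \<le> count_list xs True \<Longrightarrow>
             word_pmf (bernoulli_pmf p) xs \<le> 2 powr (length xs * (\<delta> - bin_entropy p))"
  shows "1 - 2 powr (L * (1 - bin_entropy p + \<delta>)) / fact n
           - (\<Sum>xs\<in>{xs. length xs = L \<and> count_list xs True < \<theta> * L}. word_pmf (bernoulli_pmf p) xs)
           - real n * log 2 (real n) / R / (real L + 1) \<le> ns_max_error p n c"
proof -
  have "2 powr (L * (\<delta> - bin_entropy p)) * 2 ^ L = 2 powr (L * (1 - bin_entropy p + \<delta>))"
    by (simp add: powr_realpow[symmetric] powr_add[symmetric] algebra_simps)
  moreover have "word_pmf (bernoulli_pmf p) xs \<le> 2 powr (L * (\<delta> - bin_entropy p))"
    if "length xs = L" "\<not> count_list xs True < \<theta> * L" for xs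
    using typical[of xs] that by simp
  ultimately show ?thesis
    using ns_max_error_ge[of "2 powr (L * (\<delta> - bin_entropy p))" L "\<lambda>xs. count_list xs True < \<theta> * L"]
    by simp
qed

end

section \<open>Asymptotics\<close>

lemma pow_div_fact_le_exp:
  fixes x :: real
  assumes "0 \<le> x"
  shows "x ^ n / fact n \<le> exp x"
proof -
  have exp_sums: "(\<lambda>k. x ^ k / fact k) sums exp x"
    using exp_converges[of x] by (simp add: divide_inverse mult.commute)
  have "(\<Sum>k\<in>{n}. x ^ k / fact k) \<le> (\<Sum>k. x ^ k / fact k)"
    using exp_sums assms by (intro sum_le_suminf) (auto simp: sums_summable)
  then show ?thesis
    using sums_unique[OF exp_sums] by simp
qed

lemma powr_self_div_fact_tendsto_0:
  fixes \<gamma> :: real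
  assumes "\<gamma> < 1"
  shows "(\<lambda>n. real n powr (\<gamma> * n) / fact n) \<longlonglongrightarrow> 0"
proof (rule tendsto_sandwich[where f = "\<lambda>_. 0" and h = "\<lambda>n. (1 / 2) ^ n"])
  have "(\<lambda>n. exp 1 * real n powr (\<gamma> - 1)) \<longlonglongrightarrow> exp 1 * 0"
    using assms by (intro tendsto_mult tendsto_const tendsto_neg_powr filterlim_real_sequentially) simp
  then have "\<forall>\<^sub>F n in sequentially. exp 1 * real n powr (\<gamma> - 1) < 1 / 2"
    by (rule order_tendstoD(2)) simp
  then show "\<forall>\<^sub>F n in sequentially. real n powr (\<gamma> * n) / fact n \<le> (1 / 2) ^ n"
    using eventually_gt_at_top[of 0]
  proof eventually_elim
    case (elim n)
    then have n: "0 < real n" by simp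
    have "real n powr (\<gamma> * n) / fact n = real n powr ((\<gamma> - 1) * n) * (real n ^ n / fact n)"
      using n by (simp add: powr_diff powr_realpow algebra_simps)
    also have "\<dots> \<le> real n powr ((\<gamma> - 1) * n) * exp (real n)"
      by (intro mult_left_mono pow_div_fact_le_exp) simp_all
    also have "\<dots> = (exp 1 * real n powr (\<gamma> - 1)) ^ n"
      using n by (simp add: power_mult_distrib powr_powr powr_realpow[symmetric]
          exp_of_nat_mult[symmetric] mult.commute)
    also have "\<dots> \<le> (1 / 2) ^ n"
      using elim by (intro power_mono) simp_all
    finally show ?case .
  qed
  show "(\<lambda>n. (1 / 2 :: real) ^ n) \<longlonglongrightarrow> 0"
    by (rule LIMSEQ_realpow_zero) simp_all
qed simp_all

definition log_budget :: "real \<Rightarrow> nat \<Rightarrow> nat" where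
  "log_budget \<mu> n = nat \<lfloor>\<mu> * n * log 2 n\<rfloor>"

lemma log_budget_bounds:
  assumes "0 \<le> \<mu>" "1 \<le> n"
  shows "log_budget \<mu> n \<le> \<mu> * n * log 2 n" "\<mu> * n * log 2 n < real (log_budget \<mu> n) + 1"
proof -
  have "0 \<le> \<mu> * n * log 2 n"
    using assms by simp
  then show "log_budget \<mu> n \<le> \<mu> * n * log 2 n" "\<mu> * n * log 2 n < real (log_budget \<mu> n) + 1"
    unfolding log_budget_def by linarith+
qed

lemma filterlim_log_budget:
  assumes "0 < \<mu>"
  shows "filterlim (log_budget \<mu>) sequentially sequentially"
proof -
  have "filterlim (\<lambda>n. \<mu> * real n) at_top sequentially"
    using assms by (intro filterlim_tendsto_pos_mult_at_top filterlim_real_sequentially) auto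
  moreover have "\<forall>\<^sub>F n in sequentially. \<mu> * real n \<le> \<mu> * real n * log 2 n"
    using eventually_ge_at_top[of "2::nat"]
    by eventually_elim (use assms in \<open>simp add: mult_le_cancel_left1 mult_less_0_iff\<close>)
  ultimately have "filterlim (\<lambda>n. \<mu> * real n * log 2 n) at_top sequentially"
    by (rule filterlim_at_top_mono)
  then show ?thesis
    unfolding log_budget_def
    by (intro filterlim_compose[OF filterlim_nat_sequentially] filterlim_compose[OF filterlim_floor_sequentially])
qed

lemma two_powr_log_budget_div_fact_tendsto_0:
  fixes \<mu> D :: real
  assumes "0 < \<mu>" "0 < D" "\<mu> * D < 1"
  shows "(\<lambda>n. 2 powr (log_budget \<mu> n * D) / fact n) \<longlonglongrightarrow> 0"
proof (rule tendsto_sandwich[where f = "\<lambda>_. 0"])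
  show "\<forall>\<^sub>F n in sequentially. 2 powr (log_budget \<mu> n * D) / fact n \<le> real n powr (\<mu> * D * n) / fact n"
    using eventually_ge_at_top[of "1::nat"]
  proof eventually_elim
    case (elim n)
    have "2 powr (log_budget \<mu> n * D) \<le> 2 powr (\<mu> * n * log 2 n * D)"
      using log_budget_bounds(1)[of \<mu> n] assms elim by (intro powr_mono mult_right_mono) simp_all
    also have "\<dots> = (2 powr log 2 n) powr (\<mu> * D * n)"
      by (simp add: powr_powr algebra_simps)
    also have "\<dots> = real n powr (\<mu> * D * n)"
      using elim by simp
    finally show ?case
      by (simp add: divide_right_mono)
  qed
  show "(\<lambda>n. real n powr (\<mu> * D * n) / fact n) \<longlonglongrightarrow> 0"
    by (rule powr_self_div_fact_tendsto_0) fact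
qed simp_all

context noisy_sorting_code
begin

lemma ns_max_error_ge_log_budget:
  fixes \<theta> \<delta> :: real
  assumes "2 \<le> n" "0 < \<mu>"
    and typical: "\<And>xs. \<theta> * length xs \<le> count_list xs True \<Longrightarrow>
             word_pmf (bernoulli_pmf p) xs \<le> 2 powr (length xs * (\<delta> - bin_entropy p))"
  defines "L \<equiv> log_budget \<mu> n"
  shows "1 - 1 / (\<mu> * R) - 2 powr (L * (1 - bin_entropy p + \<delta>)) / fact n
           - (\<Sum>xs\<in>{xs. length xs = L \<and> count_list xs True < \<theta> * L}. word_pmf (bernoulli_pmf p) xs)
           \<le> ns_max_error p n c"
proof -
  have "real n * log 2 n / R / (real L + 1) \<le> real n * log 2 n / R / (\<mu> * n * log 2 n)"
    using log_budget_bounds(2)[of \<mu> n] assms R unfolding L_def by (intro divide_left_mono) simp_all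
  also have "\<dots> = 1 / (\<mu> * R)"
    using \<open>2 \<le> n\<close> by (simp add: less_imp_neq[symmetric])
  finally show ?thesis
    using ns_max_error_ge_entropy[where L = L and \<theta> = \<theta> and \<delta> = \<delta>, OF typical] by linarith
qed

end

lemma ns_achievable_le:
  assumes p: "0 \<le> p" "p < 1/2" and "ns_achievable p R"
  shows "R \<le> 1 - bin_entropy p"
proof (rule ccontr)
  assume "\<not> R \<le> 1 - bin_entropy p"
  from \<open>ns_achievable p R\<close> obtain c where "0 < R" and codes: "\<And>n. n \<ge> 2 \<Longrightarrow> is_ns_code p R n (c n)"
    and err_lim: "(\<lambda>n. ns_max_error p n (c n)) \<longlonglongrightarrow> 0"
    unfolding ns_achievable_def by blast
  \<comment> \<open>The \<open>max\<close> makes \<open>D\<close> positive without having to show \<open>bin_entropy p \<le> 1\<close>.\<close>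
  define D where "D = (R + max (1 - bin_entropy p) 0) / 2"
  define \<mu> where "\<mu> = 2 / (R + D)"
  have "0 < D" "D < R" "1 - bin_entropy p < D"
    using \<open>0 < R\<close> \<open>\<not> R \<le> 1 - bin_entropy p\<close> by (auto simp: D_def)
  have "0 < \<mu>" "\<mu> * D < 1" "1 < \<mu> * R"
    using \<open>0 < D\<close> \<open>D < R\<close> by (simp_all add: \<mu>_def field_simps)
  obtain \<theta> :: real where "\<theta> < p" and typical: "\<And>xs. \<theta> * length xs \<le> count_list xs True \<Longrightarrow>
      word_pmf (bernoulli_pmf p) xs \<le> 2 powr (length xs * ((D - (1 - bin_entropy p)) - bin_entropy p))"
    using bernoulli_word_pmf_typical_le[OF p, of "D - (1 - bin_entropy p)"] \<open>1 - bin_entropy p < D\<close> by auto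
  define \<beta> where
    "\<beta> L = (\<Sum>xs\<in>{xs. length xs = L \<and> count_list xs True < \<theta> * L}. word_pmf (bernoulli_pmf p) xs)"
    for L :: nat
  have error_ge: "1 - 1 / (\<mu> * R) - 2 powr (log_budget \<mu> n * D) / fact n - \<beta> (log_budget \<mu> n)
      \<le> ns_max_error p n (c n)" if "2 \<le> n" for n
  proof -
    interpret noisy_sorting_code p R n "c n"
      using codes[OF that] p \<open>0 < R\<close> that by unfold_locales simp_all
    show ?thesis
      using ns_max_error_ge_log_budget[OF that \<open>0 < \<mu>\<close> typical] by (simp add: \<beta>_def)
  qed
  have "(\<lambda>n. \<beta> (log_budget \<mu> n)) \<longlonglongrightarrow> 0"
    unfolding \<beta>_def using p \<open>\<theta> < p\<close> filterlim_log_budget[OF \<open>0 < \<mu>\<close>]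
    by (intro filterlim_compose[OF sum_bernoulli_word_pmf_few_ones_tendsto_0]) simp_all
  then have "(\<lambda>n. 1 - 1 / (\<mu> * R) - 2 powr (log_budget \<mu> n * D) / fact n - \<beta> (log_budget \<mu> n))
      \<longlonglongrightarrow> 1 - 1 / (\<mu> * R) - 0 - 0"
    using two_powr_log_budget_div_fact_tendsto_0[OF \<open>0 < \<mu>\<close> \<open>0 < D\<close> \<open>\<mu> * D < 1\<close>]
    by (intro tendsto_diff tendsto_const)
  then have "1 - 1 / (\<mu> * R) \<le> 0"
    using err_lim error_ge by (intro LIMSEQ_le[simplified]) (auto intro!: exI[of _ 2])
  then show False
    using \<open>1 < \<mu> * R\<close> by (simp add: field_simps)
qed

theorem theorem3:
  fixes p :: real
  assumes "0 \<le> p" and "p < 1/2"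
  shows "ns_capacity p \<le> ereal (1 - bin_entropy p)"
  unfolding ns_capacity_def
  using ns_achievable_le[OF assms] by (intro Sup_least) auto

end
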